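(* Let $A=\mathbb C\langle u^{\pm1},v^{\pm1}\rangle$ and $c=uvu^{-1}v^{-1}$. For every $H\in A$ one has $\{H,c\}_K=0$; in particular, for each $H$ (equivalently each class in $A/[A,A]$, since $\{H,\cdot\}_K$ depends only on $\pi(H)$) the Hamilton flow $\frac{d}{dt}x=\{H,x\}_K$ preserves $c$.
   Context: $A$ is the group algebra over $\mathbb C$ of the free group on $u,v$; $[A,A]$ is the span of all $ab-ba$; $\pi:A\to A/[A,A]$ the projection. $\mu(a\otimes b)=ab$; $A\otimes A$ has componentwise multiplication. The double bracket $\llbracket\cdot\rrbracket_K:A\otimes A\to A\otimes A$ is the linear map with $\llbracket u\otimes v\rrbracket_K=-vu\otimes1$, $\llbracket v\otimes u\rrbracket_K=uv\otimes1$, $\llbracket u\otimes u\rrbracket_K=\llbracket v\otimes v\rrbracket_K=0$, extended (also to inverse letters) by the Leibniz rules $\llbracket a\otimes bc\rrbracket_K=\llbracket a\otimes b\rrbracket_K(1\otimes c)+(b\otimes1)\llbracket a\otimes c\rrbracket_K$ and $\llbracket ab\otimes c\rrbracket_K=\llbracket a\otimes c\rrbracket_K(b\otimes1)+(1\otimes a)\llbracket b\otimes c\rrbracket_K$. The bracket is $\{a,b\}_K=\mu(\llbracket a\otimes b\rrbracket_K)$. *)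

theory Defs
  imports Complex_Main "HOL-Library.Poly_Mapping" "HOL-Library.Product_Plus"
begin

datatype gen = U | V

type_synonym letter = "gen \<times> bool"   (* (g, True) = g, (g, False) = g^-1 *)

fun linv :: "letter \<Rightarrow> letter" where
  "linv (g, b) = (g, \<not> b)"

lemma linv_linv[simp]: "linv (linv x) = x"
  by (cases x) simp

fun reduced :: "letter list \<Rightarrow> bool" where
  "reduced [] = True"
| "reduced [x] = True"
| "reduced (x # y # w) = (y \<noteq> linv x \<and> reduced (y # w))"

fun lcons :: "letter \<Rightarrow> letter list \<Rightarrow> letter list" where
  "lcons x [] = [x]"
| "lcons x (y # w) = (if y = linv x then w else x # y # w)"

lemma reduced_tl: "reduced (y # w) \<Longrightarrow> reduced w"
  by (cases w) auto

lemma reduced_lcons: "reduced w \<Longrightarrow> reduced (lcons x w)"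
  by (cases w) (auto dest: reduced_tl)

lemma reduced_foldr: "reduced w \<Longrightarrow> reduced (foldr lcons a w)"
  by (induction a) (auto intro: reduced_lcons)

lemma lcons_inv: "reduced r \<Longrightarrow> lcons x (lcons (linv x) r) = r"
proof (cases r)
  case (Cons y r')
  assume red: "reduced r"
  show ?thesis
  proof (cases "y = x")
    case True
    have "lcons x r' = x # r'"
    proof (cases r')
      case (Cons z r'')
      with red \<open>r = y # r'\<close> True show ?thesis by auto
    qed simp
    with True Cons show ?thesis by simp
  next
    case False
    with Cons show ?thesis by auto
  qed
qed simp

lemma foldr_lcons_lcons:
  assumes "reduced w" "reduced b"
  shows "foldr lcons (lcons x w) b = lcons x (foldr lcons w b)"
proof (cases w)
  case (Cons y w')
  show ?thesis
  proof (cases "y = linv x")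
    case True
    have "reduced (foldr lcons w' b)" using assms by (intro reduced_foldr)
    then show ?thesis using Cons True lcons_inv[of "foldr lcons w' b" x] by simp
  qed (use Cons in simp)
qed simp

lemma foldr_lcons_assoc:
  assumes "reduced w" "reduced b"
  shows "foldr lcons (foldr lcons a w) b = foldr lcons a (foldr lcons w b)"
  using assms
proof (induction a)
  case (Cons x a)
  then show ?case
    by (simp add: foldr_lcons_lcons reduced_foldr)
qed simp

lemma foldr_lcons_inverse:
  "foldr lcons (rev (map linv a)) a = []"
proof (induction a)
  case (Cons x a)
  have "lcons (linv x) (x # a) = a" by simp
  then show ?case using Cons by simp
qed simp

lemma reduced_snoc2: "reduced (l @ [z]) \<Longrightarrow> t \<noteq> linv z \<Longrightarrow> reduced (l @ [z, t])"
  by (induction l rule: reduced.induct) auto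

typedef fg = "{w. reduced w}" morphisms word Abs_fg
  by (rule exI[of _ "[]"]) simp

setup_lifting type_definition_fg

(* the group operation is written additively (class group_add, not assumed commutative) *)
instantiation fg :: group_add
begin

lift_definition zero_fg :: fg is "[]" by simp

lift_definition plus_fg :: "fg \<Rightarrow> fg \<Rightarrow> fg" is "\<lambda>a b. foldr lcons a b"
  by (simp add: reduced_foldr)

lemma reduced_rev_linv: "reduced w \<Longrightarrow> reduced (rev (map linv w))"
proof (induction w rule: reduced.induct)
  case (3 x y w)
  then have IH: "reduced (rev (map linv w) @ [linv y])" by simp
  have "y \<noteq> linv x" using 3 by simp
  then have "linv x \<noteq> linv (linv y)" by (cases x; cases y) auto
  note gen = reduced_snoc2
  have "linv x \<noteq> linv (linv y)" by fact
  then have "reduced (rev (map linv w) @ [linv y, linv x])"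
    using gen[OF IH, of "linv x"] by simp
  then show ?case by simp
qed auto

lift_definition uminus_fg :: "fg \<Rightarrow> fg" is "\<lambda>a. rev (map linv a)"
  by (rule reduced_rev_linv)

definition minus_fg :: "fg \<Rightarrow> fg \<Rightarrow> fg" where
  "minus_fg a b = a + uminus b"

instance
proof
  fix a b c :: fg
  show "a + b + c = a + (b + c)"
    by transfer (simp add: foldr_lcons_assoc)
  show "0 + a = a" by transfer simp
  show "a + 0 = a"
  proof transfer
    fix a :: "letter list" assume "reduced a"
    then show "foldr lcons a [] = a"
    proof (induction a)
      case (Cons x a)
      from Cons.prems have "reduced a" by (rule reduced_tl)
      with Cons have "foldr lcons a [] = a" by simp
      with Cons.prems show ?case by (cases a) auto
    qed simp
  qed
  show "- a + a = 0" by transfer (rule foldr_lcons_inverse)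
  show "a + - b = a - b" by (simp add: minus_fg_def)
qed

end

lift_definition gu :: fg is "[(U, True)]" by simp
lift_definition gv :: fg is "[(V, True)]" by simp

lifting_forget fg.lifting

type_synonym alg = "fg \<Rightarrow>\<^sub>0 complex"
(* A \<otimes>_C A is identified with the group algebra of F_2 \<times> F_2; its multiplication
   (convolution) is the componentwise multiplication (a\<otimes>b)(c\<otimes>d) = ac \<otimes> bd *)
type_synonym alg2 = "(fg \<times> fg) \<Rightarrow>\<^sub>0 complex"

definition grp :: "fg \<Rightarrow> alg" where
  "grp g = Poly_Mapping.single g 1"

definition uA :: alg where "uA = grp gu"
definition vA :: alg where "vA = grp gv"
definition uinvA :: alg where "uinvA = grp (- gu)"
definition vinvA :: alg where "vinvA = grp (- gv)"

definition cA :: alg where "cA = uA * vA * uinvA * vinvA"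

lift_definition tensor :: "alg \<Rightarrow> alg \<Rightarrow> alg2"
  is "\<lambda>a b (g, h). a g * b h"
proof -
  fix a b :: "fg \<Rightarrow> complex"
  assume fa: "finite {x. a x \<noteq> 0}" and fb: "finite {x. b x \<noteq> 0}"
  have "{p. (case p of (g, h) \<Rightarrow> a g * b h) \<noteq> 0} \<subseteq> {x. a x \<noteq> 0} \<times> {x. b x \<noteq> 0}"
    by auto
  then show "finite {p. (case p of (g, h) \<Rightarrow> a g * b h) \<noteq> 0}"
    using finite_subset fa fb by blast
qed

definition mu :: "alg2 \<Rightarrow> alg" where
  "mu x = (\<Sum>p\<in>Poly_Mapping.keys x. Poly_Mapping.single (fst p + snd p) (Poly_Mapping.lookup x p))"

definition smult2 :: "complex \<Rightarrow> alg2 \<Rightarrow> alg2" where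
  "smult2 z x = Poly_Mapping.map (\<lambda>w. z * w) x"

definition clinear2 :: "(alg2 \<Rightarrow> alg2) \<Rightarrow> bool" where
  "clinear2 D \<longleftrightarrow> (\<forall>x y. D (x + y) = D x + D y) \<and> (\<forall>z x. D (smult2 z x) = smult2 z (D x))"

definition is_double_bracket_K :: "(alg2 \<Rightarrow> alg2) \<Rightarrow> bool" where
  "is_double_bracket_K D \<longleftrightarrow>
     clinear2 D \<and>
     D (tensor uA vA) = - tensor (vA * uA) 1 \<and>
     D (tensor vA uA) = tensor (uA * vA) 1 \<and>
     D (tensor uA uA) = 0 \<and>
     D (tensor vA vA) = 0 \<and>
     (\<forall>a b c. D (tensor a (b * c)) = D (tensor a b) * tensor 1 c + tensor b 1 * D (tensor a c)) \<and>
     (\<forall>a b c. D (tensor (a * b) c) = D (tensor a c) * tensor b 1 + tensor 1 a * D (tensor b c))"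

definition bracket_K :: "(alg2 \<Rightarrow> alg2) \<Rightarrow> alg \<Rightarrow> alg \<Rightarrow> alg" where
  "bracket_K D a b = mu (D (tensor a b))"

end

theory Submission
  imports Defs
begin

text \<open>
  For every \<open>a \<in> A\<close> and all \<open>L, R \<in> A\<close> one has the sandwich identity
  \<open>\<mu>((1\<otimes>L) \<lbrakk>a\<otimes>c\<rbrakk>\<^sub>K (R\<otimes>1)) = uv (RLa - aRL) u\<^sup>-\<^sup>1v\<^sup>-\<^sup>1\<close>.
  By the Leibniz rule in the first argument the set of \<open>a\<close> satisfying it is closed
  under products (the free parameters \<open>L\<close>, \<open>R\<close> absorb the outer factors), and it is
  closed under sums, scalars and inverses; for \<open>a = u, v\<close> it is a direct
  computation from the defining values of the double bracket. Hence it holds on all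
  of \<open>A\<close>, and \<open>L = R = 1\<close> gives \<open>{a, c}\<^sub>K = 0\<close>.
\<close>

lemma poly_mapping_single_add_induct:
  fixes P :: "('a \<Rightarrow>\<^sub>0 'b::monoid_add) \<Rightarrow> bool"
  assumes "P 0" "\<And>k v. P (Poly_Mapping.single k v)" "\<And>a b. P a \<Longrightarrow> P b \<Longrightarrow> P (a + b)"
  shows "P f"
proof (induction f rule: update_induct)
  case const then show ?case using assms(1) .
next
  case (update f a b)
  have "Poly_Mapping.update a b f = Poly_Mapping.single a b + f"
    using update(1)
    by (intro poly_mapping_eqI) (auto simp: lookup_update lookup_add lookup_single when_def in_keys_iff)
  then show ?case using assms update by simp
qed

lemma tensor_add_left: "tensor (a + b) c = tensor a c + tensor b c"
  by (intro poly_mapping_eqI) (auto simp: tensor.rep_eq lookup_add algebra_simps split: prod.splits)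

lemma tensor_add_right: "tensor c (a + b) = tensor c a + tensor c b"
  by (intro poly_mapping_eqI) (auto simp: tensor.rep_eq lookup_add algebra_simps split: prod.splits)

lemma tensor_zero_left [simp]: "tensor 0 c = 0"
  by (intro poly_mapping_eqI) (auto simp: tensor.rep_eq split: prod.splits)

lemma tensor_zero_right [simp]: "tensor c 0 = 0"
  by (intro poly_mapping_eqI) (auto simp: tensor.rep_eq split: prod.splits)

lemma tensor_single:
  "tensor (Poly_Mapping.single g z) (Poly_Mapping.single h w) = Poly_Mapping.single (g, h) (z * w)"
  by (intro poly_mapping_eqI) (auto simp: tensor.rep_eq lookup_single when_def split: prod.splits)

lemma tensor_one: "tensor 1 1 = 1"
  by (simp only: single_one[symmetric] tensor_single zero_prod_def[symmetric]) simp

lemma tensor_mult: "tensor a b * tensor c d = tensor (a * c) (b * d)"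
proof (induction a rule: poly_mapping_single_add_induct)
  case (2 g1 z1)
  show ?case
  proof (induction b rule: poly_mapping_single_add_induct)
    case (2 h1 w1)
    show ?case
    proof (induction c rule: poly_mapping_single_add_induct)
      case (2 g2 z2)
      show ?case
      proof (induction d rule: poly_mapping_single_add_induct)
        case (2 h2 w2)
        show ?case by (simp add: tensor_single mult_single algebra_simps)
      qed (simp_all add: tensor_add_right distrib_left)
    qed (simp_all add: tensor_add_left distrib_left distrib_right)
  qed (simp_all add: tensor_add_right distrib_left distrib_right)
qed (simp_all add: tensor_add_left distrib_left distrib_right)

lemma mu_eq_sum_over_superset:
  assumes "finite S" "Poly_Mapping.keys x \<subseteq> S"
  shows "mu x = (\<Sum>p\<in>S. Poly_Mapping.single (fst p + snd p) (Poly_Mapping.lookup x p))"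
  unfolding mu_def
  by (rule sum.mono_neutral_left) (use assms in \<open>auto simp: in_keys_iff\<close>)

lemma mu_add: "mu (x + y) = mu x + mu y"
proof -
  let ?S = "Poly_Mapping.keys x \<union> Poly_Mapping.keys y"
  have S: "finite ?S" by simp
  have "mu (x + y) = (\<Sum>p\<in>?S. Poly_Mapping.single (fst p + snd p) (Poly_Mapping.lookup (x + y) p))"
    by (rule mu_eq_sum_over_superset[OF S]) (rule keys_add)
  also have "\<dots> = (\<Sum>p\<in>?S. Poly_Mapping.single (fst p + snd p) (Poly_Mapping.lookup x p))
                + (\<Sum>p\<in>?S. Poly_Mapping.single (fst p + snd p) (Poly_Mapping.lookup y p))"
    by (simp add: lookup_add single_add sum.distrib)
  also have "\<dots> = mu x + mu y"
    by (simp add: mu_eq_sum_over_superset[OF S, symmetric])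
  finally show ?thesis .
qed

lemma mu_zero [simp]: "mu 0 = 0"
  by (simp add: mu_def)

lemma mu_uminus: "mu (- x) = - mu x"
  using minus_unique[of "mu x" "mu (- x)"] mu_add[of x "- x"] by simp

lemma mu_diff: "mu (x - y) = mu x - mu y"
  using mu_add[of x "- y"] by (simp add: mu_uminus)

lemma mu_single: "mu (Poly_Mapping.single (g, h) z) = Poly_Mapping.single (g + h) z"
  by (subst mu_eq_sum_over_superset[of "{(g, h)}"]) auto

lemma mu_tensor: "mu (tensor a b) = a * b"
proof (induction a rule: poly_mapping_single_add_induct)
  case (2 g z)
  show ?case
  proof (induction b rule: poly_mapping_single_add_induct)
    case (2 h w)
    show ?case by (simp add: tensor_single mu_single mult_single)
  qed (simp_all add: tensor_add_right mu_add distrib_left)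
qed (simp_all add: tensor_add_left mu_add distrib_right)

lemma mu_sandwich_tensor: "mu (tensor 1 L * tensor p q * tensor R 1) = p * R * L * q"
  by (simp add: tensor_mult mu_tensor mult.assoc)

lemma mu_sandwich_tensor_diff:
  "mu (tensor 1 L * (tensor p q - tensor p' q') * tensor R 1) = p * R * L * q - p' * R * L * q'"
  by (simp add: left_diff_distrib right_diff_distrib mu_diff mu_sandwich_tensor)

lemma tensor_mult_assoc: "tensor a b * (tensor c d * X) = tensor (a * c) (b * d) * X"
  by (simp add: tensor_mult mult.assoc[symmetric])

lemma single_zero_mult_commute: "Poly_Mapping.single 0 z * (x :: alg) = x * Poly_Mapping.single 0 z"
proof (induction x rule: poly_mapping_single_add_induct)
  case (2 k v) show ?case by (simp add: mult_single mult.commute)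
qed (simp_all add: distrib_left distrib_right)

lemma grp_add: "grp (g + h) = grp g * grp h"
  by (simp add: grp_def mult_single)

lemma grp_zero: "grp 0 = 1"
  by (simp add: grp_def)

lemma generator_inverses:
  "uA * uinvA = 1" "uinvA * uA = 1" "vA * vinvA = 1" "vinvA * vA = 1"
  by (simp_all add: uA_def uinvA_def vA_def vinvA_def grp_add[symmetric] grp_zero)

lemma generator_inverses_assoc:
  "uA * (uinvA * x) = x" "uinvA * (uA * x) = x" "vA * (vinvA * x) = x" "vinvA * (vA * x) = x"
  by (simp_all add: mult.assoc[symmetric] generator_inverses)

lemma fg_cons_letter:
  assumes "word g = x # w"
  shows "g = Abs_fg [x] + Abs_fg w"
proof -
  have red: "reduced (x # w)" using word[of g] assms by simp
  then have "reduced w" by (rule reduced_tl)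
  moreover have "lcons x w = x # w"
    using red by (cases w) auto
  ultimately have "word (Abs_fg [x] + Abs_fg w) = word g"
    by (simp add: plus_fg.rep_eq Abs_fg_inverse assms)
  then show ?thesis by (simp add: word_inject)
qed

lemma fg_induct:
  assumes "P 0"
    and "\<And>g. P g \<Longrightarrow> P (gu + g)" "\<And>g. P g \<Longrightarrow> P (- gu + g)"
    and "\<And>g. P g \<Longrightarrow> P (gv + g)" "\<And>g. P g \<Longrightarrow> P (- gv + g)"
  shows "P g"
proof -
  have letter: "Abs_fg [x] \<in> {gu, - gu, gv, - gv}" for x :: letter
  proof -
    obtain G b where "x = (G, b)" by fastforce
    then show ?thesis
      by (cases G; cases b)
         (simp_all add: word_inject[symmetric] gu.rep_eq gv.rep_eq uminus_fg.rep_eq Abs_fg_inverse)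
  qed
  have "\<forall>g. word g = w \<longrightarrow> P g" for w
  proof (induction w)
    case Nil
    have "g = 0" if "word g = []" for g
      using that by (simp add: word_inject[symmetric] zero_fg.rep_eq)
    then show ?case using assms(1) by blast
  next
    case (Cons x w)
    show ?case
    proof (intro allI impI)
      fix g
      assume g: "word g = x # w"
      then have "reduced w" using word[of g] by (auto dest: reduced_tl)
      then have "P (Abs_fg w)" using Cons.IH by (simp add: Abs_fg_inverse)
      then have "P (Abs_fg [x] + Abs_fg w)" using letter[of x] assms(2-5) by auto
      then show "P g" using fg_cons_letter[OF g] by simp
    qed
  qed
  then show ?thesis by blast
qed

definition conj_uv :: "alg \<Rightarrow> alg" where
  "conj_uv x = uA * vA * x * uinvA * vinvA"

context
  fixes D :: "alg2 \<Rightarrow> alg2"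
  assumes D: "is_double_bracket_K D"
begin

lemma D_add: "D (x + y) = D x + D y"
  using D by (simp add: is_double_bracket_K_def clinear2_def)

lemma D_scalar_mult: "D (Poly_Mapping.single 0 z * x) = Poly_Mapping.single 0 z * D x"
  using D by (simp add: is_double_bracket_K_def clinear2_def smult2_def mult_map_scale_conv_mult)

lemma D_tensor_mult_right: "D (tensor a (b * c)) = D (tensor a b) * tensor 1 c + tensor b 1 * D (tensor a c)"
  using D by (simp add: is_double_bracket_K_def)

lemma D_tensor_mult_left: "D (tensor (a * b) c) = D (tensor a c) * tensor b 1 + tensor 1 a * D (tensor b c)"
  using D by (simp add: is_double_bracket_K_def)

lemma D_tensor_one_right: "D (tensor a 1) = 0"
  using D_tensor_mult_right[of a 1 1] by (simp add: tensor_one)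

lemma D_tensor_one_left: "D (tensor 1 c) = 0"
  using D_tensor_mult_left[of 1 1 c] by (simp add: tensor_one)

lemma D_tensor_inverse_right:
  assumes "b * c = 1" "c * b = 1"
  shows "D (tensor a c) = - (tensor c 1 * D (tensor a b) * tensor 1 c)"
proof -
  have "0 = tensor c 1 * (D (tensor a b) * tensor 1 c + tensor b 1 * D (tensor a c))"
    using D_tensor_mult_right[of a b c] assms by (simp add: D_tensor_one_right)
  also have "\<dots> = tensor c 1 * D (tensor a b) * tensor 1 c + D (tensor a c)"
    by (simp add: distrib_left mult.assoc[symmetric] tensor_mult assms tensor_one)
  finally show ?thesis by (simp add: eq_neg_iff_add_eq_0 add.commute)
qed

lemma D_tensor_inverse_left:
  assumes "x * y = 1" "y * x = 1"
  shows "D (tensor y c) = - (tensor 1 y * D (tensor x c) * tensor y 1)"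
proof -
  have "0 = tensor 1 y * (D (tensor x c) * tensor y 1 + tensor 1 x * D (tensor y c))"
    using D_tensor_mult_left[of x y c] assms by (simp add: D_tensor_one_left)
  also have "\<dots> = tensor 1 y * D (tensor x c) * tensor y 1 + D (tensor y c)"
    by (simp add: distrib_left mult.assoc[symmetric] tensor_mult assms tensor_one)
  finally show ?thesis by (simp add: eq_neg_iff_add_eq_0 add.commute)
qed

lemma D_generators:
  "D (tensor uA uA) = 0" "D (tensor uA vA) = - tensor (vA * uA) 1"
  "D (tensor vA vA) = 0" "D (tensor vA uA) = tensor (uA * vA) 1"
  using D by (simp_all add: is_double_bracket_K_def)

lemma D_generator_inverses:
  "D (tensor uA uinvA) = 0" "D (tensor uA vinvA) = tensor uA vinvA"
  "D (tensor vA vinvA) = 0" "D (tensor vA uinvA) = - tensor vA uinvA"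
  by (simp_all add: D_tensor_inverse_right[OF generator_inverses(1,2)]
      D_tensor_inverse_right[OF generator_inverses(3,4)] D_generators tensor_mult
      mult.assoc generator_inverses_assoc generator_inverses)

lemma D_tensor_cA:
  "D (tensor a cA) = ((D (tensor a uA) * tensor 1 vA + tensor uA 1 * D (tensor a vA)) * tensor 1 uinvA
     + tensor (uA * vA) 1 * D (tensor a uinvA)) * tensor 1 vinvA + tensor (uA * vA * uinvA) 1 * D (tensor a vinvA)"
  by (simp only: cA_def D_tensor_mult_right)

lemma D_tensor_u_cA: "D (tensor uA cA) = tensor (uA * vA) vinvA - tensor (uA * vA * uA) (uinvA * vinvA)"
  by (simp add: D_tensor_cA D_generators D_generator_inverses tensor_mult mult.assoc
      generator_inverses_assoc generator_inverses)

lemma D_tensor_v_cA: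
  "D (tensor vA cA) = tensor (uA * vA) (vA * uinvA * vinvA) - tensor (uA * vA * vA) (uinvA * vinvA)"
  by (simp add: D_tensor_cA D_generators D_generator_inverses tensor_mult mult.assoc
      generator_inverses_assoc generator_inverses algebra_simps)

definition sandwich_identity :: "alg \<Rightarrow> bool" where
  "sandwich_identity a \<longleftrightarrow>
     (\<forall>L R. mu (tensor 1 L * D (tensor a cA) * tensor R 1) = conj_uv (R * L * a - a * R * L))"

lemma sandwich_identity_add:
  "sandwich_identity a \<Longrightarrow> sandwich_identity b \<Longrightarrow> sandwich_identity (a + b)"
  unfolding sandwich_identity_def
  by (simp add: tensor_add_left D_add distrib_left distrib_right mu_add conj_uv_def algebra_simps)

lemma sandwich_identity_mult:
  assumes "sandwich_identity a" "sandwich_identity b"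
  shows "sandwich_identity (a * b)"
  unfolding sandwich_identity_def
proof (intro allI)
  fix L R
  have "tensor 1 L * D (tensor (a * b) cA) * tensor R 1
      = tensor 1 L * D (tensor a cA) * tensor (b * R) 1 + tensor 1 (L * a) * D (tensor b cA) * tensor R 1"
    by (simp add: D_tensor_mult_left distrib_left distrib_right mult.assoc tensor_mult_assoc tensor_mult)
  then have "mu (tensor 1 L * D (tensor (a * b) cA) * tensor R 1)
      = conj_uv (b * R * L * a - a * (b * R) * L) + conj_uv (R * (L * a) * b - b * R * (L * a))"
    using assms unfolding sandwich_identity_def by (simp add: mu_add)
  also have "\<dots> = conj_uv (R * L * (a * b) - a * b * R * L)"
    by (simp add: conj_uv_def algebra_simps)
  finally show "mu (tensor 1 L * D (tensor (a * b) cA) * tensor R 1) = conj_uv (R * L * (a * b) - a * b * R * L)" .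
qed

lemma sandwich_identity_inverse:
  assumes "sandwich_identity x" "x * y = 1" "y * x = 1"
  shows "sandwich_identity y"
  unfolding sandwich_identity_def
proof (intro allI)
  fix L R
  have cancel: "x * (y * z) = z" "y * (x * z) = z" for z
    using assms by (simp_all add: mult.assoc[symmetric])
  have "tensor 1 L * D (tensor y cA) * tensor R 1
      = - (tensor 1 (L * y) * D (tensor x cA) * tensor (y * R) 1)"
    by (simp add: D_tensor_inverse_left[OF assms(2,3)] mult.assoc tensor_mult_assoc tensor_mult)
  then have "mu (tensor 1 L * D (tensor y cA) * tensor R 1)
      = - conj_uv (y * R * (L * y) * x - x * (y * R) * (L * y))"
    using assms(1) unfolding sandwich_identity_def by (simp add: mu_uminus)
  also have "\<dots> = conj_uv (R * L * y - y * R * L)"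
    by (simp add: conj_uv_def algebra_simps cancel)
  finally show "mu (tensor 1 L * D (tensor y cA) * tensor R 1) = conj_uv (R * L * y - y * R * L)" .
qed

lemma sandwich_identity_scalar: "sandwich_identity (Poly_Mapping.single 0 z)"
proof -
  have "tensor (Poly_Mapping.single 0 z) (1 :: alg) = Poly_Mapping.single 0 z"
    by (simp only: single_one[symmetric] tensor_single zero_prod_def[symmetric]) simp
  then have "tensor (Poly_Mapping.single 0 z) cA = Poly_Mapping.single 0 z * tensor 1 cA"
    using tensor_mult[of "Poly_Mapping.single 0 z" 1 1 cA] by simp
  then show ?thesis
    unfolding sandwich_identity_def
    by (simp add: D_scalar_mult D_tensor_one_left single_zero_mult_commute mult.assoc conj_uv_def)
qed

lemma sandwich_identity_u: "sandwich_identity uA"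
  unfolding sandwich_identity_def D_tensor_u_cA mu_sandwich_tensor_diff
  by (simp add: conj_uv_def algebra_simps generator_inverses_assoc)

lemma sandwich_identity_v: "sandwich_identity vA"
  unfolding sandwich_identity_def D_tensor_v_cA mu_sandwich_tensor_diff
  by (simp add: conj_uv_def algebra_simps generator_inverses_assoc)

lemma sandwich_identity_uinv: "sandwich_identity uinvA"
  by (rule sandwich_identity_inverse[OF sandwich_identity_u generator_inverses(1,2)])

lemma sandwich_identity_vinv: "sandwich_identity vinvA"
  by (rule sandwich_identity_inverse[OF sandwich_identity_v generator_inverses(3,4)])

lemma sandwich_identity_grp: "sandwich_identity (grp g)"
proof (induction g rule: fg_induct)
  case 1
  then show ?case using sandwich_identity_scalar[of 1] by (simp add: grp_zero)
next
  case (2 g)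
  then show ?case
    unfolding grp_add by (rule sandwich_identity_mult[OF sandwich_identity_u[unfolded uA_def]])
next
  case (3 g)
  then show ?case
    unfolding grp_add by (rule sandwich_identity_mult[OF sandwich_identity_uinv[unfolded uinvA_def]])
next
  case (4 g)
  then show ?case
    unfolding grp_add by (rule sandwich_identity_mult[OF sandwich_identity_v[unfolded vA_def]])
next
  case (5 g)
  then show ?case
    unfolding grp_add by (rule sandwich_identity_mult[OF sandwich_identity_vinv[unfolded vinvA_def]])
qed

lemma sandwich_identity_all: "sandwich_identity H"
proof (induction H rule: poly_mapping_single_add_induct)
  case 1
  then show ?case using sandwich_identity_scalar[of 0] by simp
next
  case (2 k z)
  have "Poly_Mapping.single k z = Poly_Mapping.single 0 z * grp k"
    by (simp add: grp_def mult_single)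
  then show ?case
    using sandwich_identity_mult[OF sandwich_identity_scalar sandwich_identity_grp] by simp
next
  case (3 a b)
  then show ?case by (rule sandwich_identity_add)
qed

lemma bracket_K_cA_eq_zero: "bracket_K D H cA = 0"
proof -
  have "bracket_K D H cA = mu (tensor 1 1 * D (tensor H cA) * tensor 1 1)"
    by (simp add: bracket_K_def tensor_one)
  also have "\<dots> = conj_uv (1 * 1 * H - H * 1 * 1)"
    using sandwich_identity_all[of H] unfolding sandwich_identity_def by (rule spec2)
  also have "\<dots> = 0"
    by (simp add: conj_uv_def)
  finally show ?thesis .
qed

end

theorem mainTheorem5:
  fixes D :: "alg2 \<Rightarrow> alg2"
  assumes "is_double_bracket_K D"
  shows "\<forall>H :: alg. bracket_K D H cA = 0"
  using bracket_K_cA_eq_zero[OF assms] by blast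

end
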